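(* A simple binary matroid is chordal if and only if it does not have $U_{3,4}$ as an induced minor.
   Context: A matroid $M$ is chordal if, for each circuit $C$ of $M$ with at least four elements, there are circuits $C_1$ and $C_2$ and an element $e$ such that $C_1\cap C_2=\{e\}$ and $C=(C_1\cup C_2)-e$. An induced minor of $M$ is a matroid obtained from $M$ by a sequence of restrictions to flats and contractions, each contraction followed by simplification. *)

theory Defs
  imports Main "HOL-Library.Z2"
begin

definition matroid :: "'a set \<Rightarrow> ('a set \<Rightarrow> bool) \<Rightarrow> bool" where
  "matroid E I \<longleftrightarrow> finite E \<and> I {} \<and> (\<forall>X. I X \<longrightarrow> X \<subseteq> E)
     \<and> (\<forall>X Y. I Y \<and> X \<subseteq> Y \<longrightarrow> I X)
     \<and> (\<forall>X Y. I X \<and> I Y \<and> card X < card Y \<longrightarrow> (\<exists>y\<in>Y - X. I (insert y X)))"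

definition rank :: "('a set \<Rightarrow> bool) \<Rightarrow> 'a set \<Rightarrow> nat" where
  "rank I X = Max (card ` {Y. Y \<subseteq> X \<and> I Y})"

definition circuit :: "'a set \<Rightarrow> ('a set \<Rightarrow> bool) \<Rightarrow> 'a set \<Rightarrow> bool" where
  "circuit E I C \<longleftrightarrow> C \<subseteq> E \<and> \<not> I C \<and> (\<forall>x\<in>C. I (C - {x}))"

definition loop :: "'a set \<Rightarrow> ('a set \<Rightarrow> bool) \<Rightarrow> 'a \<Rightarrow> bool" where
  "loop E I e \<longleftrightarrow> circuit E I {e}"

definition simple_matroid :: "'a set \<Rightarrow> ('a set \<Rightarrow> bool) \<Rightarrow> bool" where
  "simple_matroid E I \<longleftrightarrow> (\<forall>C. circuit E I C \<longrightarrow> card C \<ge> 3)"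

text \<open>Binary: representable over GF(2); element e is represented by the vector r e
  (coordinates indexed by nat).  X is independent iff the vectors are linearly
  independent, i.e. no nonempty subfamily sums to zero.\<close>
definition binary_matroid :: "'a set \<Rightarrow> ('a set \<Rightarrow> bool) \<Rightarrow> bool" where
  "binary_matroid E I \<longleftrightarrow> (\<exists>r :: 'a \<Rightarrow> nat \<Rightarrow> bit. \<forall>X. X \<subseteq> E \<longrightarrow>
      (I X \<longleftrightarrow> (\<forall>Y. Y \<subseteq> X \<and> Y \<noteq> {} \<longrightarrow> (\<exists>i. (\<Sum>e\<in>Y. r e i) \<noteq> 0))))"

definition chordal :: "'a set \<Rightarrow> ('a set \<Rightarrow> bool) \<Rightarrow> bool" where
  "chordal E I \<longleftrightarrow> (\<forall>C. circuit E I C \<and> card C \<ge> 4 \<longrightarrow>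
      (\<exists>C1 C2 e. circuit E I C1 \<and> circuit E I C2 \<and> C1 \<inter> C2 = {e} \<and> C = (C1 \<union> C2) - {e}))"

definition closure :: "'a set \<Rightarrow> ('a set \<Rightarrow> bool) \<Rightarrow> 'a set \<Rightarrow> 'a set" where
  "closure E I X = {x\<in>E. rank I (insert x X) = rank I X}"

definition flat :: "'a set \<Rightarrow> ('a set \<Rightarrow> bool) \<Rightarrow> 'a set \<Rightarrow> bool" where
  "flat E I F \<longleftrightarrow> F \<subseteq> E \<and> closure E I F = F"

definition restr_indep :: "('a set \<Rightarrow> bool) \<Rightarrow> 'a set \<Rightarrow> 'a set \<Rightarrow> bool" where
  "restr_indep I S X \<longleftrightarrow> I X \<and> X \<subseteq> S"

text \<open>Independence predicate of the contraction M/T (ground set E - T).\<close>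
definition contr_indep :: "'a set \<Rightarrow> ('a set \<Rightarrow> bool) \<Rightarrow> 'a set \<Rightarrow> 'a set \<Rightarrow> bool" where
  "contr_indep E I T X \<longleftrightarrow> X \<subseteq> E - T \<and> rank I (X \<union> T) = card X + rank I T"

text \<open>S is the ground set of a simplification of M: it consists of non-loops and
  contains exactly one element of each parallel class of non-loops.\<close>
definition simplification_set :: "'a set \<Rightarrow> ('a set \<Rightarrow> bool) \<Rightarrow> 'a set \<Rightarrow> bool" where
  "simplification_set E I S \<longleftrightarrow> S \<subseteq> E \<and> (\<forall>s\<in>S. \<not> loop E I s) \<and>
     (\<forall>e\<in>E. \<not> loop E I e \<longrightarrow> (\<exists>!s. s \<in> S \<and> rank I {e, s} = 1))"

inductive induced_minor :: "'a set \<Rightarrow> ('a set \<Rightarrow> bool) \<Rightarrow> 'a set \<Rightarrow> ('a set \<Rightarrow> bool) \<Rightarrow> bool"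
  for E I where
  refl: "induced_minor E I E I"
| restrict_flat: "induced_minor E I E' I' \<Longrightarrow> flat E' I' F \<Longrightarrow>
      induced_minor E I F (restr_indep I' F)"
| contract_simplify: "induced_minor E I E' I' \<Longrightarrow> T \<subseteq> E' \<Longrightarrow>
      simplification_set (E' - T) (contr_indep E' I' T) S \<Longrightarrow>
      induced_minor E I S (restr_indep (contr_indep E' I' T) S)"

definition is_U34 :: "'a set \<Rightarrow> ('a set \<Rightarrow> bool) \<Rightarrow> bool" where
  "is_U34 E I \<longleftrightarrow> card E = 4 \<and> (\<forall>X. I X \<longleftrightarrow> X \<subseteq> E \<and> card X \<le> 3)"

end

theory Submission
  imports Defs
begin

(* Every induced minor of M has the form (M/T)|A where each element spanned by A in M/T is a
   loop of M/T or parallel in M/T to an element of A; restricting to a flat and contracting then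
   simplifying both preserve this form.  Suppose M is chordal and (M/T)|A is U_{3,4}.  Among the
   circuits C of M whose non-loops in M/T form a 4-element circuit of M/T meeting the parallel
   class of every element of A, take one of minimum size.  A chordal decomposition of C into
   C1 and C2 sharing e gives a smaller such circuit: if e is a loop of M/T, the one of C1, C2 that
   meets the four points contains all of them; otherwise e is parallel in M/T to one of the four
   points and replaces it in the other circuit.

   Conversely, over GF(2) the vectors of a circuit sum to zero, so the symmetric difference of
   two circuits through x is dependent; this splits a circuit C at every x in cl C - C.  A circuit
   of size at least 4 without a chordal decomposition is therefore a flat, and contracting all but four of its
   elements, simplifying, and restricting to those four yields U_{3,4}. *)

lemma rank_restr_indep: "rank (restr_indep J S) X = rank J (X \<inter> S)"
  unfolding rank_def restr_indep_def by (metis (lifting) Int_subset_iff)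

lemma restr_indep_restr_indep: "S \<subseteq> A \<Longrightarrow> restr_indep (restr_indep J A) S = restr_indep J S"
  by (auto simp: restr_indep_def fun_eq_iff)

lemma sum_bit_sym_diff:
  fixes v :: "'a \<Rightarrow> bit"
  assumes "finite A" "finite B"
  shows "(\<Sum>e\<in>sym_diff A B. v e) = (\<Sum>e\<in>A. v e) + (\<Sum>e\<in>B. v e)"
proof -
  let ?s = "\<Sum>e\<in>A \<inter> B. v e"
  have A: "(\<Sum>e\<in>A. v e) = (\<Sum>e\<in>A - B. v e) + ?s"
    using sum.Int_Diff[OF assms(1), of v B] by (simp only: add.commute)
  have B: "(\<Sum>e\<in>B. v e) = (\<Sum>e\<in>B - A. v e) + ?s"
    using sum.Int_Diff[OF assms(2), of v A] by (simp only: add.commute Int_commute)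
  have "(\<Sum>e\<in>sym_diff A B. v e) = (\<Sum>e\<in>A - B. v e) + (\<Sum>e\<in>B - A. v e)"
    using assms by (intro sum.union_disjoint) auto
  also have "\<dots> = (\<Sum>e\<in>A - B. v e) + (\<Sum>e\<in>B - A. v e) + (?s + ?s)"
    by simp
  also have "\<dots> = (\<Sum>e\<in>A. v e) + (\<Sum>e\<in>B. v e)"
    unfolding A B by (simp only: ac_simps)
  finally show ?thesis .
qed

lemma card_Un_Diff_common:
  assumes "finite A" "finite B" "A \<inter> B = {e}"
  shows "card ((A \<union> B) - {e}) + 2 = card A + card B"
proof -
  have "(A \<union> B) - {e} = (A - {e}) \<union> (B - {e})" "(A - {e}) \<inter> (B - {e}) = {}" "e \<in> A" "e \<in> B"
    using assms(3) by blast+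
  moreover have "card A > 0" "card B > 0"
    using assms(1,2) \<open>e \<in> A\<close> \<open>e \<in> B\<close> card_gt_0_iff by blast+
  ultimately show ?thesis using assms(1,2) card_Un_disjoint[of "A - {e}" "B - {e}"]
    by (simp add: card_Diff_singleton)
qed

lemma obtain_transversal_extending:
  assumes "F \<subseteq> N" "inj_on g F"
  obtains S where "F \<subseteq> S" "S \<subseteq> N" "\<forall>e\<in>N. \<exists>!s. s \<in> S \<and> g s = g e"
proof -
  define pick where "pick k = (if k \<in> g ` F then the_inv_into F g k else SOME s. s \<in> N \<and> g s = k)" for k
  have pick: "pick (g e) \<in> N \<and> g (pick (g e)) = g e" if "e \<in> N" for e
  proof (cases "g e \<in> g ` F")
    case True
    then show ?thesis
      using assms f_the_inv_into_f[OF assms(2)] the_inv_into_into[OF assms(2)] by (auto simp: pick_def)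
  next
    case False
    have "\<exists>s. s \<in> N \<and> g s = g e" using that by blast
    then show ?thesis using False someI_ex by (simp add: pick_def)
  qed
  have "f = pick (g f)" if "f \<in> F" for f
    using that the_inv_into_f_f[OF assms(2)] by (simp add: pick_def)
  then have "F \<subseteq> pick ` g ` N" using assms(1) by blast
  moreover have "pick ` g ` N \<subseteq> N" using pick by blast
  moreover have "\<exists>!s. s \<in> pick ` g ` N \<and> g s = g e" if "e \<in> N" for e
  proof (rule ex1I[of _ "pick (g e)"])
    fix s assume "s \<in> pick ` g ` N \<and> g s = g e"
    then obtain e' where "e' \<in> N" "s = pick (g e')" "g s = g e" by blast
    then show "s = pick (g e)" using pick[of e'] by simp
  qed (use pick that in blast)
  ultimately show thesis by (intro that ballI)
qed

locale indep_matroid =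
  fixes E :: "'a set" and I :: "'a set \<Rightarrow> bool"
  assumes matroid: "matroid E I"
begin

lemma finite_ground: "finite E"
  and indep_empty: "I {}"
  and indep_subset_ground: "I X \<Longrightarrow> X \<subseteq> E"
  and indep_subset: "I Y \<Longrightarrow> X \<subseteq> Y \<Longrightarrow> I X"
  and indep_augment: "I X \<Longrightarrow> I Y \<Longrightarrow> card X < card Y \<Longrightarrow> \<exists>y\<in>Y - X. I (insert y X)"
  using matroid unfolding matroid_def by blast+

lemma finite_indep: "I X \<Longrightarrow> finite X"
  using indep_subset_ground finite_ground finite_subset by blast

abbreviation r :: "'a set \<Rightarrow> nat" where "r \<equiv> rank I"

abbreviation cl :: "'a set \<Rightarrow> 'a set" where "cl \<equiv> closure E I"

lemma finite_indep_cards: "finite (card ` {Y. Y \<subseteq> X \<and> I Y})"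
proof -
  have "card ` {Y. Y \<subseteq> X \<and> I Y} \<subseteq> {..card E}"
    using card_mono[OF finite_ground] indep_subset_ground by auto
  then show ?thesis using finite_subset by blast
qed

lemma card_le_rank: "Y \<subseteq> X \<Longrightarrow> I Y \<Longrightarrow> card Y \<le> r X"
  unfolding rank_def by (rule Max_ge[OF finite_indep_cards]) auto

lemma obtain_rank_indep:
  obtains Y where "Y \<subseteq> X" "I Y" "card Y = r X"
proof -
  have "r X \<in> card ` {Y. Y \<subseteq> X \<and> I Y}" unfolding rank_def
    by (rule Max_in[OF finite_indep_cards]) (use indep_empty in auto)
  then show thesis using that by auto
qed

lemma rank_mono: "X \<subseteq> Y \<Longrightarrow> r X \<le> r Y"
proof -
  assume "X \<subseteq> Y"
  obtain Z where "Z \<subseteq> X" "I Z" "card Z = r X" by (rule obtain_rank_indep)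
  then show ?thesis using card_le_rank[of Z Y] \<open>X \<subseteq> Y\<close> by simp
qed

lemma rank_le_card: "finite X \<Longrightarrow> r X \<le> card X"
proof -
  assume "finite X"
  obtain Z where "Z \<subseteq> X" "card Z = r X" by (rule obtain_rank_indep)
  then show ?thesis using card_mono[OF \<open>finite X\<close> \<open>Z \<subseteq> X\<close>] by simp
qed

lemma rank_indep: "I X \<Longrightarrow> r X = card X"
  using card_le_rank[of X X] rank_le_card[OF finite_indep] by (simp add: le_antisym)

lemma indep_iff_rank: "X \<subseteq> E \<Longrightarrow> I X \<longleftrightarrow> r X = card X"
proof
  assume "X \<subseteq> E" "r X = card X"
  obtain Y where "Y \<subseteq> X" "I Y" "card Y = r X" by (rule obtain_rank_indep)
  then show "I X"
    using card_subset_eq[of X Y] finite_subset[OF \<open>X \<subseteq> E\<close> finite_ground] \<open>r X = card X\<close> by simp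
qed (rule rank_indep)

lemma rank_insert_le: "r (insert x X) \<le> Suc (r X)"
proof -
  obtain Y where Y: "Y \<subseteq> insert x X" "I Y" "card Y = r (insert x X)"
    by (rule obtain_rank_indep)
  have "card (Y - {x}) \<le> r X"
    using Y indep_subset by (intro card_le_rank) auto
  moreover have "card Y \<le> Suc (card (Y - {x}))"
    using finite_indep[OF Y(2)] by (cases "x \<in> Y") (simp_all add: card_Diff_singleton)
  ultimately show ?thesis using Y by simp
qed

lemma rank_Un_le: "finite X \<Longrightarrow> r (X \<union> T) \<le> card X + r T"
proof (induction X rule: finite_induct)
  case (insert x X)
  then show ?case using rank_insert_le[of x "X \<union> T"] by simp
qed simp

lemma indep_extend_to_rank:
  assumes "I Y" "Y \<subseteq> X"
  obtains B where "Y \<subseteq> B" "B \<subseteq> X" "I B" "card B = r X"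
proof -
  let ?P = "\<lambda>Z. Y \<subseteq> Z \<and> Z \<subseteq> X \<and> I Z"
  obtain Z where Z: "?P Z" and max: "\<And>Z'. ?P Z' \<Longrightarrow> card E - card Z \<le> card E - card Z'"
    using ex_has_least_nat[of ?P Y "\<lambda>Z. card E - card Z"] assms by blast
  have "r X \<le> card Z"
  proof (rule ccontr)
    assume "\<not> ?thesis"
    obtain W where W: "W \<subseteq> X" "I W" "card W = r X" by (rule obtain_rank_indep)
    then obtain w where w: "w \<in> W - Z" "I (insert w Z)"
      using indep_augment[of Z W] Z \<open>\<not> _\<close> by auto
    then have "card E - card Z \<le> card E - card (insert w Z)"
      using W Z by (intro max) auto
    moreover have "card (insert w Z) = Suc (card Z)"
      using w finite_indep Z by simp
    moreover have "card (insert w Z) \<le> card E"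
      using card_mono[OF finite_ground indep_subset_ground[OF w(2)]] .
    ultimately show False by linarith
  qed
  then show thesis using that Z card_le_rank[of Z X] by fastforce
qed

lemma rank_submodular: "r (A \<union> B) + r (A \<inter> B) \<le> r A + r B"
proof -
  obtain B0 where B0: "B0 \<subseteq> A \<inter> B" "I B0" "card B0 = r (A \<inter> B)"
    by (rule obtain_rank_indep)
  obtain B1 where B1: "B0 \<subseteq> B1" "B1 \<subseteq> A" "I B1" "card B1 = r A"
    by (rule indep_extend_to_rank[OF B0(2), of A]) (use B0(1) in blast)
  obtain B2 where B2: "B1 \<subseteq> B2" "B2 \<subseteq> A \<union> B" "I B2" "card B2 = r (A \<union> B)"
    by (rule indep_extend_to_rank[OF B1(3), of "A \<union> B"]) (use B1(2) in blast)
  have fin: "finite B2" using finite_indep B2 by blast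
  have "card (B2 \<inter> A) \<le> r A"
    using B2 indep_subset by (intro card_le_rank) auto
  then have B1_eq: "B1 = B2 \<inter> A"
    using card_seteq[of "B2 \<inter> A" B1] B1 B2 fin by auto
  have "card (B0 \<union> (B2 - A)) \<le> r B"
    using B0 B2 indep_subset[OF B2(3)] B1(1) by (intro card_le_rank) auto
  moreover have "card (B0 \<union> (B2 - A)) = card B0 + card (B2 - A)"
    using B0 fin finite_indep[OF B0(2)] by (intro card_Un_disjoint) auto
  moreover have "card B2 = card (B2 \<inter> A) + card (B2 - A)"
    using fin by (rule card_Int_Diff)
  moreover have "card (B2 \<inter> A) = r A" using B1_eq B1(4) by simp
  ultimately show ?thesis using B0(3) B2(4) by linarith
qed

lemma closure_iff: "x \<in> cl X \<longleftrightarrow> x \<in> E \<and> r (insert x X) = r X"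
  unfolding closure_def by simp

lemma rank_insert_not_in_closure: "x \<in> E \<Longrightarrow> x \<notin> cl X \<Longrightarrow> r (insert x X) = Suc (r X)"
  using rank_insert_le[of x X] rank_mono[of X "insert x X", OF subset_insertI] by (auto simp: closure_iff)

lemma closure_subset_ground: "cl X \<subseteq> E"
  by (auto simp: closure_iff)

lemma subset_closure: "X \<subseteq> E \<Longrightarrow> X \<subseteq> cl X"
  by (auto simp: closure_iff insert_absorb)

lemma mem_closure_insert: "T \<subseteq> E \<Longrightarrow> z \<in> E \<Longrightarrow> z \<in> cl (insert z T)"
  using subset_closure[of "insert z T"] by blast

lemma closure_mono: "X \<subseteq> Y \<Longrightarrow> cl X \<subseteq> cl Y"
proof
  fix x assume XY: "X \<subseteq> Y" and "x \<in> cl X"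
  then have x: "x \<in> E" "r (insert x X) = r X" by (simp_all add: closure_iff)
  have "r (insert x Y) + r (insert x X \<inter> Y) \<le> r (insert x X) + r Y"
    using rank_submodular[of "insert x X" Y] XY by (simp add: insert_absorb2 Un_absorb1 insert_mono)
  moreover have "r X \<le> r (insert x X \<inter> Y)" using XY by (intro rank_mono) auto
  moreover have "r Y \<le> r (insert x Y)" by (rule rank_mono) auto
  ultimately show "x \<in> cl Y" using x by (simp add: closure_iff)
qed

lemma rank_Un_closure: "Y \<subseteq> cl X \<Longrightarrow> r (X \<union> Y) = r X"
proof -
  assume Y: "Y \<subseteq> cl X"
  have "finite Y" using Y finite_subset[OF _ finite_ground] closure_subset_ground by blast
  from this Y show ?thesis
  proof (induction Y rule: finite_induct)
    case (insert y Y)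
    then have IH: "r (X \<union> Y) = r X" and y: "r (insert y X) = r X" by (auto simp: closure_iff)
    have "r (X \<union> insert y Y) + r ((X \<union> Y) \<inter> insert y X) \<le> r (X \<union> Y) + r (insert y X)"
      using rank_submodular[of "X \<union> Y" "insert y X"] by (simp add: Un_commute Un_left_commute)
    moreover have "r X \<le> r ((X \<union> Y) \<inter> insert y X)" by (rule rank_mono) auto
    moreover have "r X \<le> r (X \<union> insert y Y)" by (rule rank_mono) auto
    ultimately show ?case using IH y by linarith
  qed simp
qed

lemma closure_subset_closureI: "X \<subseteq> cl Y \<Longrightarrow> cl X \<subseteq> cl Y"
proof
  fix x assume XY: "X \<subseteq> cl Y" and "x \<in> cl X"
  then have "x \<in> cl (Y \<union> X)" using closure_mono[of X "Y \<union> X"] by blast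
  then have "r (insert x (Y \<union> X)) = r (Y \<union> X)" and "x \<in> E" by (simp_all add: closure_iff)
  moreover have "r (Y \<union> X) = r Y" using rank_Un_closure[OF XY] .
  moreover have "r (insert x Y) \<le> r (insert x (Y \<union> X))" by (rule rank_mono) auto
  moreover have "r Y \<le> r (insert x Y)" by (rule rank_mono) auto
  ultimately show "x \<in> cl Y" by (simp add: closure_iff)
qed

lemma closure_insert_subset:
  assumes "T \<subseteq> E" "w \<in> cl (insert z T)"
  shows "cl (insert w T) \<subseteq> cl (insert z T)"
proof -
  have "T \<subseteq> cl (insert z T)"
    using subset_closure[OF assms(1)] closure_mono[of T "insert z T"] by blast
  then show ?thesis using assms(2) by (intro closure_subset_closureI) blast
qed

lemma closure_exchange:
  assumes "x \<in> cl (insert y T)" "x \<notin> cl T" "y \<in> E"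
  shows "y \<in> cl (insert x T)"
proof -
  have "r (insert x T) = Suc (r T)"
    using assms(1,2) closure_subset_ground by (intro rank_insert_not_in_closure) auto
  moreover have "r (insert x (insert y T)) = r (insert y T)" using assms(1) by (simp add: closure_iff)
  moreover have "r (insert y T) \<le> Suc (r T)" by (rule rank_insert_le)
  moreover have "r (insert x T) \<le> r (insert y (insert x T))" by (rule rank_mono) auto
  ultimately have "r (insert y (insert x T)) = r (insert x T)" by (simp add: insert_commute)
  then show ?thesis using assms(3) by (simp add: closure_iff)
qed

lemma closure_insert_eq:
  assumes "T \<subseteq> E" "z \<in> E" "w \<notin> cl T" "w \<in> cl (insert z T)"
  shows "cl (insert w T) = cl (insert z T)"
  using closure_insert_subset[OF assms(1)] closure_exchange[OF assms(4,3,2)] assms(4) by blast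

lemma rank_Un_closure_eq: "T \<subseteq> E \<Longrightarrow> r (X \<union> cl T) = r (X \<union> T)"
proof -
  assume "T \<subseteq> E"
  have "cl T \<subseteq> cl (X \<union> T)" by (rule closure_mono) auto
  then have "r ((X \<union> T) \<union> cl T) = r (X \<union> T)" by (rule rank_Un_closure)
  moreover have "(X \<union> T) \<union> cl T = X \<union> cl T" using subset_closure[OF \<open>T \<subseteq> E\<close>] by auto
  ultimately show ?thesis by simp
qed

lemma rank_insert_parallel:
  assumes "T \<subseteq> E" "e \<in> E" "f \<in> E" "cl (insert e T) = cl (insert f T)" "T \<subseteq> Z"
  shows "r (insert e Z) = r (insert f Z)"
proof -
  have "cl (insert f T) \<subseteq> cl (insert f Z)" "cl (insert e T) \<subseteq> cl (insert e Z)"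
    using assms(5) by (meson closure_mono insert_mono)+
  then have "e \<in> cl (insert f Z)" "f \<in> cl (insert e Z)"
    using assms(1-4) mem_closure_insert by blast+
  then have "r (insert e (insert f Z)) = r (insert f Z)" "r (insert f (insert e Z)) = r (insert e Z)"
    by (simp_all add: closure_iff)
  then show ?thesis by (simp add: insert_commute)
qed

lemma circuitD:
  assumes "circuit E I C"
  shows "C \<subseteq> E" "finite C" "\<not> I C" "C \<noteq> {}" "x \<in> C \<Longrightarrow> I (C - {x})"
  using assms finite_subset[OF _ finite_ground] indep_empty unfolding circuit_def by auto

lemma circuit_psubset_indep: "circuit E I C \<Longrightarrow> X \<subset> C \<Longrightarrow> I X"
proof -
  assume C: "circuit E I C" and "X \<subset> C"
  then obtain x where "x \<in> C" "X \<subseteq> C - {x}" by blast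
  then show "I X" using circuitD(5)[OF C] indep_subset by blast
qed

lemma rank_circuit:
  assumes "circuit E I C"
  shows "r C = card C - 1"
proof -
  obtain x where x: "x \<in> C" using circuitD(4)[OF assms] by blast
  have "r (C - {x}) = card C - 1"
    using rank_indep[OF circuitD(5)[OF assms x]] circuitD(2)[OF assms] x by simp
  moreover have "r (C - {x}) \<le> r C" by (rule rank_mono) auto
  moreover have "r C < card C"
    using indep_iff_rank[OF circuitD(1)] rank_le_card[OF circuitD(2)] circuitD(3) assms
    by (simp add: order_less_le)
  ultimately show ?thesis by linarith
qed

lemma circuit_mem_closure:
  assumes "circuit E I C" "e \<in> C"
  shows "e \<in> cl (C - {e})"
proof -
  have "r (C - {e}) = card C - 1"
    using rank_indep[OF circuitD(5)[OF assms]] circuitD(2)[OF assms(1)] assms(2) by simp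
  then show ?thesis
    using rank_circuit[OF assms(1)] circuitD(1)[OF assms(1)] assms(2)
    by (auto simp: closure_iff insert_absorb)
qed

lemma obtain_circuit:
  assumes "X \<subseteq> E" "\<not> I X"
  obtains C where "C \<subseteq> X" "circuit E I C"
proof -
  let ?P = "\<lambda>D. D \<subseteq> X \<and> \<not> I D"
  obtain D where D: "?P D" and min: "\<And>D'. ?P D' \<Longrightarrow> card D \<le> card D'"
    using ex_has_least_nat[of ?P X card] assms by blast
  have "finite D" using D assms(1) finite_subset[OF _ finite_ground] by blast
  then have "I (D - {x})" if "x \<in> D" for x
    using min[of "D - {x}"] D card_Diff1_less[OF _ that] by fastforce
  then have "circuit E I D" using D assms(1) unfolding circuit_def by blast
  then show thesis using that D by blast
qed

lemma circuit_contract_dependent: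
  assumes T: "T \<subseteq> E" and C: "circuit E I C" and ne: "C - cl T \<noteq> {}"
  shows "\<not> contr_indep E I T (C - cl T)"
proof -
  have "r (C \<union> cl T) + r (C \<inter> cl T) \<le> r C + r (cl T)" by (rule rank_submodular)
  moreover have "r (C \<union> cl T) = r ((C - cl T) \<union> T)"
    using rank_Un_closure_eq[OF T, of "C - cl T"] by (simp add: Un_Diff_cancel2)
  moreover have "r (cl T) = r T" using rank_Un_closure_eq[OF T, of "{}"] by simp
  moreover have "r (C \<inter> cl T) = card (C \<inter> cl T)"
    using ne by (intro rank_indep circuit_psubset_indep[OF C]) auto
  moreover have "card C = card (C \<inter> cl T) + card (C - cl T)"
    using circuitD(2)[OF C] by (rule card_Int_Diff)
  moreover have "card (C - cl T) > 0"
    using ne circuitD(2)[OF C] by (simp add: card_gt_0_iff)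
  ultimately have "r ((C - cl T) \<union> T) < card (C - cl T) + r T"
    using rank_circuit[OF C] by linarith
  then show ?thesis unfolding contr_indep_def by simp
qed

abbreviation minor_indep :: "'a set \<Rightarrow> 'a set \<Rightarrow> 'a set \<Rightarrow> bool" where
  "minor_indep T A \<equiv> restr_indep (contr_indep E I T) A"

lemma indep_eq_minor_indep: "I = minor_indep {} E"
proof
  fix X
  have "r {} = 0" using rank_le_card[of "{}"] by simp
  then show "I X = minor_indep {} E X"
    using indep_iff_rank[of X] indep_subset_ground[of X]
    by (auto simp: restr_indep_def contr_indep_def)
qed

lemma minor_indep_ground: "minor_indep T (E - T) = contr_indep E I T"
  by (auto simp: fun_eq_iff restr_indep_def contr_indep_def)

lemma rank_contr_indep:
  assumes T: "T \<subseteq> E"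
  shows "rank (contr_indep E I T) X = r (X \<union> T) - r T"
proof -
  let ?S = "card ` {Y. Y \<subseteq> X \<and> contr_indep E I T Y}"
  have "?S \<subseteq> card ` Pow E" by (auto simp: contr_indep_def)
  then have fin: "finite ?S" using finite_ground finite_subset by blast
  have le: "y \<le> r (X \<union> T) - r T" if "y \<in> ?S" for y
  proof -
    obtain Y where Y: "Y \<subseteq> X" "contr_indep E I T Y" "y = card Y" using \<open>y \<in> ?S\<close> by blast
    have "r (Y \<union> T) \<le> r (X \<union> T)" using Y(1) by (intro rank_mono) blast
    then show ?thesis using Y(2,3) unfolding contr_indep_def by linarith
  qed
  obtain BT where BT: "BT \<subseteq> T" "I BT" "card BT = r T" by (rule obtain_rank_indep)
  obtain B where B: "BT \<subseteq> B" "B \<subseteq> X \<union> T" "I B" "card B = r (X \<union> T)"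
    by (rule indep_extend_to_rank[OF BT(2), of "X \<union> T"]) (use BT(1) in blast)
  have finB: "finite B" using finite_indep[OF B(3)] .
  have "card (B \<inter> T) \<le> r T" using B(3) indep_subset by (intro card_le_rank) auto
  then have BT_eq: "BT = B \<inter> T" using card_seteq[of "B \<inter> T" BT] B BT finB by auto
  have card_B: "card B = card (B \<inter> T) + card (B - T)" using finB by (rule card_Int_Diff)
  have "r (B - T \<union> T) \<le> card (B - T) + r T" using finB by (intro rank_Un_le) simp
  moreover have "r B \<le> r (B - T \<union> T)" by (rule rank_mono) blast
  ultimately have "contr_indep E I T (B - T)"
    using rank_indep[OF B(3)] card_B BT_eq BT(3) indep_subset_ground[OF B(3)]
    unfolding contr_indep_def by auto
  then have "r (X \<union> T) - r T \<in> ?S"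
    using B(2,4) card_B BT_eq BT(3) by (intro image_eqI[of _ _ "B - T"]) auto
  then show ?thesis unfolding rank_def[of "contr_indep E I T"] by (intro Max_eqI[OF fin le])
qed

lemma rank_minor_indep: "T \<subseteq> E \<Longrightarrow> rank (minor_indep T A) X = r ((X \<inter> A) \<union> T) - r T"
  by (simp add: rank_restr_indep rank_contr_indep)

lemma contr_indep_minor_indep:
  assumes T: "T \<subseteq> E" and A: "A \<subseteq> E - T" and T': "T' \<subseteq> A"
  shows "contr_indep A (minor_indep T A) T' = minor_indep (T \<union> T') (A - T')"
proof
  fix X
  show "contr_indep A (minor_indep T A) T' X = minor_indep (T \<union> T') (A - T') X"
  proof (cases "X \<subseteq> A - T'")
    case True
    then have "(X \<union> T') \<inter> A = X \<union> T'" "T' \<inter> A = T'" using T' by auto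
    then have "rank (minor_indep T A) (X \<union> T') = r (X \<union> (T \<union> T')) - r T"
      and "rank (minor_indep T A) T' = r (T \<union> T') - r T"
      using rank_minor_indep[OF T] by (simp_all add: Un_ac)
    moreover have "r T \<le> r (T \<union> T')" "r (T \<union> T') \<le> r (X \<union> (T \<union> T'))"
      by (simp_all add: rank_mono)
    ultimately show ?thesis
      using True A by (auto simp: contr_indep_def restr_indep_def)
  qed (auto simp: contr_indep_def restr_indep_def)
qed

lemma closure_minor_indep:
  assumes T: "T \<subseteq> E" and A: "A \<subseteq> E - T" and F: "F \<subseteq> A" and x: "x \<in> A"
  shows "x \<in> closure A (minor_indep T A) F \<longleftrightarrow> x \<in> cl (F \<union> T)"
proof -
  have "rank (minor_indep T A) (insert x F) = r (insert x (F \<union> T)) - r T"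
    and "rank (minor_indep T A) F = r (F \<union> T) - r T"
    using rank_minor_indep[OF T] F x by (simp_all add: Int_absorb2)
  moreover have "r T \<le> r (F \<union> T)" "r (F \<union> T) \<le> r (insert x (F \<union> T))"
    by (simp_all add: rank_mono subset_insertI)
  ultimately show ?thesis using x A by (auto simp: closure_def)
qed

lemma loop_minor_indep:
  assumes T: "T \<subseteq> E" and A: "A \<subseteq> E - T" and y: "y \<in> A"
  shows "loop A (minor_indep T A) y \<longleftrightarrow> y \<in> cl T"
proof -
  have "loop A (minor_indep T A) y \<longleftrightarrow> \<not> contr_indep E I T {y}"
    using y A T by (auto simp: loop_def circuit_def restr_indep_def contr_indep_def)
  also have "\<dots> \<longleftrightarrow> y \<in> cl T"
    using y A rank_insert_not_in_closure[of y T] by (auto simp: contr_indep_def closure_iff)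
  finally show ?thesis .
qed

lemma rank_pair_minor_indep:
  assumes T: "T \<subseteq> E" and A: "A \<subseteq> E - T" and e: "e \<in> A" "e \<notin> cl T" and s: "s \<in> A" "s \<notin> cl T"
  shows "rank (minor_indep T A) {e, s} = 1 \<longleftrightarrow> cl (insert s T) = cl (insert e T)"
proof -
  have "rank (minor_indep T A) {e, s} = r (insert s (insert e T)) - r T"
    using rank_minor_indep[OF T, of A "{e, s}"] e s by (simp add: insert_absorb2 insert_commute)
  moreover have "r (insert e T) = Suc (r T)"
    using e A by (intro rank_insert_not_in_closure) auto
  moreover have "r (insert s (insert e T)) = r (insert e T) \<longleftrightarrow> s \<in> cl (insert e T)"
    using s A by (auto simp: closure_iff)
  moreover have "r (insert e T) \<le> r (insert s (insert e T))" "r (insert s (insert e T)) \<le> Suc (r (insert e T))"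
    by (simp_all add: rank_mono subset_insertI rank_insert_le)
  moreover have "s \<in> cl (insert e T) \<longleftrightarrow> cl (insert s T) = cl (insert e T)"
    using closure_insert_eq[OF T, of e s] mem_closure_insert[OF T, of s] e s A by blast
  ultimately show ?thesis by linarith
qed

lemma simplification_set_minor_indep_iff:
  assumes T: "T \<subseteq> E" and A: "A \<subseteq> E - T"
  shows "simplification_set A (minor_indep T A) S \<longleftrightarrow> S \<subseteq> A \<and> S \<inter> cl T = {} \<and>
    (\<forall>e\<in>A - cl T. \<exists>!s. s \<in> S \<and> cl (insert s T) = cl (insert e T))"
proof (cases "S \<subseteq> A \<and> S \<inter> cl T = {}")
  case True
  have "simplification_set A (minor_indep T A) S \<longleftrightarrow>
      (\<forall>e\<in>A - cl T. \<exists>!s. s \<in> S \<and> rank (minor_indep T A) {e, s} = 1)"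
    using True loop_minor_indep[OF T A] unfolding simplification_set_def by (simp add: Ball_def disjoint_iff) blast
  also have "\<dots> \<longleftrightarrow> (\<forall>e\<in>A - cl T. \<exists>!s. s \<in> S \<and> cl (insert s T) = cl (insert e T))"
  proof (rule ball_cong[OF HOL.refl], intro arg_cong[where f = Ex1] ext)
    fix e s assume "e \<in> A - cl T"
    then show "(s \<in> S \<and> rank (minor_indep T A) {e, s} = 1) = (s \<in> S \<and> cl (insert s T) = cl (insert e T))"
      using rank_pair_minor_indep[OF T A, of e s] True by blast
  qed
  finally show ?thesis using True by simp
next
  case False
  then show ?thesis
    using loop_minor_indep[OF T A] unfolding simplification_set_def by blast
qed

definition hits_parallel_classes :: "'a set \<Rightarrow> 'a set \<Rightarrow> bool" where
  "hits_parallel_classes T A \<longleftrightarrow> cl (A \<union> T) \<subseteq> cl T \<union> (\<Union>y\<in>A. cl (insert y T))"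

lemma hits_parallel_classes_ground: "hits_parallel_classes {} E"
  unfolding hits_parallel_classes_def
  using closure_subset_ground mem_closure_insert[of "{}"] by blast

lemma hits_parallel_classes_flat:
  assumes T: "T \<subseteq> E" and A: "A \<subseteq> E - T" and hits: "hits_parallel_classes T A"
    and F: "flat A (minor_indep T A) F"
  shows "hits_parallel_classes T F"
  unfolding hits_parallel_classes_def
proof
  fix x assume x: "x \<in> cl (F \<union> T)"
  have FA: "F \<subseteq> A" using F unfolding flat_def by blast
  have "x \<in> cl (A \<union> T)" using x closure_mono[of "F \<union> T" "A \<union> T"] FA by blast
  then consider "x \<in> cl T" | y where "y \<in> A" "x \<in> cl (insert y T)"
    using hits unfolding hits_parallel_classes_def by blast
  then show "x \<in> cl T \<union> (\<Union>y\<in>F. cl (insert y T))"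
  proof cases
    case (2 y)
    show ?thesis
    proof (cases "x \<in> cl T")
      case False
      have "insert x T \<subseteq> cl (F \<union> T)"
        using x subset_closure[of "F \<union> T"] T FA A by blast
      then have "y \<in> cl (F \<union> T)"
        using closure_exchange[OF 2(2) False] 2(1) A closure_subset_closureI by blast
      then have "y \<in> F"
        using F closure_minor_indep[OF T A FA 2(1)] unfolding flat_def by blast
      then show ?thesis using 2(2) by blast
    qed simp
  qed simp
qed

lemma hits_parallel_classes_contract:
  assumes T: "T \<subseteq> E" and A: "A \<subseteq> E - T" and hits: "hits_parallel_classes T A" and T': "T' \<subseteq> A"
    and S: "simplification_set (A - T') (minor_indep (T \<union> T') (A - T')) S"
  shows "hits_parallel_classes (T \<union> T') S"
  unfolding hits_parallel_classes_def
proof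
  let ?T = "T \<union> T'" and ?A = "A - T'"
  have T2: "?T \<subseteq> E" and A2: "?A \<subseteq> E - ?T" using T A T' by auto
  have SA: "S \<subseteq> ?A"
    and rep: "\<And>y. y \<in> ?A - cl ?T \<Longrightarrow> \<exists>s\<in>S. cl (insert s ?T) = cl (insert y ?T)"
    using S unfolding simplification_set_minor_indep_iff[OF T2 A2] by blast+
  fix x assume x: "x \<in> cl (S \<union> ?T)"
  have "cl (S \<union> ?T) \<subseteq> cl (A \<union> T)" using SA T' by (intro closure_mono) auto
  then consider "x \<in> cl T" | y where "y \<in> A" "x \<in> cl (insert y T)"
    using x hits unfolding hits_parallel_classes_def by blast
  then show "x \<in> cl ?T \<union> (\<Union>s\<in>S. cl (insert s ?T))"
  proof cases
    case 1
    then show ?thesis using closure_mono[of T ?T] by blast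
  next
    case (2 y)
    then have x_y: "x \<in> cl (insert y ?T)" using closure_mono[of "insert y T" "insert y ?T"] by blast
    show ?thesis
    proof (cases "y \<in> cl ?T")
      case True
      then have "cl (insert y ?T) \<subseteq> cl ?T"
        using subset_closure[OF T2] by (intro closure_subset_closureI) blast
      then show ?thesis using x_y by blast
    next
      case False
      then have "y \<in> ?A" using 2(1) subset_closure[OF T2] by blast
      then show ?thesis using rep[of y] False x_y by blast
    qed
  qed
qed

lemma induced_minor_contract_restrict:
  assumes "induced_minor E I A J"
  shows "\<exists>T. T \<subseteq> E \<and> A \<subseteq> E - T \<and> J = minor_indep T A \<and> hits_parallel_classes T A"
  using assms
proof (induction rule: induced_minor.induct)
  case refl
  show ?case using indep_eq_minor_indep hits_parallel_classes_ground by auto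
next
  case (restrict_flat A J F)
  then obtain T where T: "T \<subseteq> E" "A \<subseteq> E - T" "J = minor_indep T A" "hits_parallel_classes T A"
    by blast
  have F: "flat A (minor_indep T A) F" using restrict_flat.hyps(2) T(3) by simp
  then have "F \<subseteq> A" unfolding flat_def by blast
  then have "restr_indep J F = minor_indep T F" using T(3) restr_indep_restr_indep by simp
  then show ?case
    using T(1,2) \<open>F \<subseteq> A\<close> hits_parallel_classes_flat[OF T(1,2,4) F] by (intro exI[of _ T]) auto
next
  case (contract_simplify A J T' S)
  then obtain T where T: "T \<subseteq> E" "A \<subseteq> E - T" "J = minor_indep T A" "hits_parallel_classes T A"
    by blast
  have eq: "contr_indep A J T' = minor_indep (T \<union> T') (A - T')"
    using contr_indep_minor_indep[OF T(1,2) contract_simplify.hyps(2)] T(3) by simp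
  have S: "simplification_set (A - T') (minor_indep (T \<union> T') (A - T')) S"
    using contract_simplify.hyps(3) eq by simp
  then have "S \<subseteq> A - T'" unfolding simplification_set_def by blast
  then have "restr_indep (contr_indep A J T') S = minor_indep (T \<union> T') S"
    using eq restr_indep_restr_indep by simp
  then show ?case
    using T(1,2) contract_simplify.hyps(2) \<open>S \<subseteq> A - T'\<close>
      hits_parallel_classes_contract[OF T(1,2,4) contract_simplify.hyps(2) S]
    by (intro exI[of _ "T \<union> T'"]) auto
qed

lemma contr_indep_swap:
  assumes T: "T \<subseteq> E" and par: "cl (insert e T) = cl (insert f T)"
    and e: "e \<in> E - T" "e \<notin> X" and f: "f \<in> E - T" "f \<notin> X" and X: "finite X"
  shows "contr_indep E I T (insert e X) \<longleftrightarrow> contr_indep E I T (insert f X)"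
proof -
  have "r (insert e X \<union> T) = r (insert f X \<union> T)"
    using rank_insert_parallel[OF T _ _ par, of "X \<union> T"] e f by simp
  then show ?thesis using e f X by (simp add: contr_indep_def)
qed

lemma contr_indep_psubset_exchange:
  assumes T: "T \<subseteq> E" and par: "cl (insert e T) = cl (insert f T)"
    and e: "e \<in> E - T" "e \<notin> F" and f: "f \<in> F" and F: "F \<subseteq> E - T" "finite F"
    and indep: "\<And>X. X \<subset> F \<Longrightarrow> contr_indep E I T X" and X: "X \<subset> insert e (F - {f})"
  shows "contr_indep E I T X"
proof (cases "e \<in> X")
  case False
  then show ?thesis using X f by (intro indep) blast
next
  case True
  have X_F: "X - {e} \<subseteq> F - {f}" using X by blast
  then have "finite (X - {e})" using F(2) finite_subset by blast
  then have "contr_indep E I T (insert e (X - {e})) \<longleftrightarrow> contr_indep E I T (insert f (X - {e}))"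
    using X_F f F(1) by (intro contr_indep_swap[OF T par e(1)]) auto
  moreover have "insert f (X - {e}) \<subset> F" using X True f by blast
  ultimately show ?thesis using indep True by (simp add: insert_absorb)
qed

lemma circuit_contract_eq:
  assumes T: "T \<subseteq> E" and C: "circuit E I C" and F: "C - cl T \<subseteq> F" "C - cl T \<noteq> {}"
    and indep: "\<And>X. X \<subset> F \<Longrightarrow> contr_indep E I T X"
  shows "C - cl T = F"
  using circuit_contract_dependent[OF T C F(2)] indep F(1) by blast

definition lifts_U34 :: "'a set \<Rightarrow> 'a set \<Rightarrow> 'a set \<Rightarrow> bool" where
  "lifts_U34 T A C \<longleftrightarrow> circuit E I C \<and> C \<subseteq> cl (A \<union> T) \<and> card (C - cl T) = 4 \<and>
     (\<forall>X. X \<subset> C - cl T \<longrightarrow> contr_indep E I T X) \<and>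
     (\<forall>y\<in>A. \<exists>f\<in>C - cl T. cl (insert f T) = cl (insert y T))"

lemma lifts_U34_exists:
  assumes T: "T \<subseteq> E" and A: "A \<subseteq> E - T" and U: "is_U34 A (minor_indep T A)"
  shows "\<exists>C. lifts_U34 T A C"
proof -
  have A4: "card A = 4" and U_iff: "\<And>X. minor_indep T A X \<longleftrightarrow> X \<subseteq> A \<and> card X \<le> 3"
    using U unfolding is_U34_def by blast+
  have finA: "finite A" using A finite_ground finite_subset by blast
  have indep: "contr_indep E I T X" if "X \<subset> A" for X
    using U_iff[of X] psubset_card_mono[OF finA that] that A4 by (auto simp: restr_indep_def)
  have dep: "\<not> contr_indep E I T A" using U_iff[of A] A4 by (simp add: restr_indep_def)
  have A_cl: "A \<inter> cl T = {}"
  proof -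
    have "r (insert y T) = Suc (r T)" if "y \<in> A" for y
    proof -
      have "card {y} \<noteq> card A" using A4 by simp
      then have "{y} \<subset> A" using that by blast
      then show ?thesis using indep[of "{y}"] by (simp add: contr_indep_def)
    qed
    then show ?thesis by (auto simp: closure_iff)
  qed
  obtain BT where BT: "BT \<subseteq> T" "I BT" "card BT = r T" by (rule obtain_rank_indep)
  have "\<not> I (A \<union> BT)"
  proof
    assume "I (A \<union> BT)"
    then have "card (A \<union> BT) \<le> r (A \<union> T)" using BT(1) by (intro card_le_rank) auto
    moreover have "card (A \<union> BT) = card A + card BT"
      using finA finite_indep[OF BT(2)] A BT(1) by (intro card_Un_disjoint) auto
    moreover have "r (A \<union> T) \<le> card A + r T" using finA by (rule rank_Un_le)
    ultimately show False using dep A BT(3) by (simp add: contr_indep_def)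
  qed
  then obtain D where D: "D \<subseteq> A \<union> BT" "circuit E I D"
    using obtain_circuit[of "A \<union> BT"] A T BT(1) by blast
  have T_cl: "T \<subseteq> cl T" using subset_closure[OF T] .
  have "D - cl T \<noteq> {}"
    using D BT A_cl T_cl circuitD(3)[OF D(2)] indep_subset[OF BT(2), of D] by blast
  then have D_A: "D - cl T = A"
    using circuit_contract_eq[OF T D(2) _ _ indep] D(1) BT(1) T_cl by blast
  have "D \<subseteq> cl (A \<union> T)" using D(1) BT(1) A T subset_closure[of "A \<union> T"] by blast
  then have "lifts_U34 T A D" using D(2) D_A A4 indep unfolding lifts_U34_def by blast
  then show ?thesis ..
qed

lemma lifts_U34_split_loop:
  assumes T: "T \<subseteq> E" and L: "lifts_U34 T A C" and C1: "circuit E I C1" and C2: "circuit E I C2"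
    and e: "C1 \<inter> C2 = {e}" "C = (C1 \<union> C2) - {e}" "e \<in> cl T"
    and f: "f \<in> C1" "f \<in> C - cl T" and C2_card: "card C2 \<ge> 3"
  shows "lifts_U34 T A C1 \<and> card C1 < card C"
proof -
  have C: "circuit E I C" "C \<subseteq> cl (A \<union> T)" "card (C - cl T) = 4"
    "\<And>X. X \<subset> C - cl T \<Longrightarrow> contr_indep E I T X"
    using L unfolding lifts_U34_def by blast+
  have "C1 - cl T = C - cl T"
    using circuit_contract_eq[OF T C1 _ _ C(4)] e f by blast
  moreover have "C1 \<subseteq> cl (A \<union> T)"
    using C(2) e closure_mono[of T "A \<union> T"] by blast
  moreover have "card C + 2 = card C1 + card C2"
    using card_Un_Diff_common[OF circuitD(2)[OF C1] circuitD(2)[OF C2] e(1)] e(2) by simp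
  ultimately show ?thesis using L C1 C2_card unfolding lifts_U34_def by auto
qed

lemma lifts_U34_split_nonloop:
  assumes T: "T \<subseteq> E" and L: "lifts_U34 T A C" and C1: "circuit E I C1" and C2: "circuit E I C2"
    and e: "C1 \<inter> C2 = {e}" "C = (C1 \<union> C2) - {e}" "e \<notin> cl T" "e \<in> cl (A \<union> T)"
    and f: "f \<in> C1" "f \<in> C - cl T" and par: "cl (insert e T) = cl (insert f T)"
    and C1_card: "card C1 \<ge> 3"
  shows "lifts_U34 T A C2 \<and> card C2 < card C"
proof -
  let ?F = "C - cl T"
  have C: "circuit E I C" "C \<subseteq> cl (A \<union> T)" "card ?F = 4"
    "\<And>X. X \<subset> ?F \<Longrightarrow> contr_indep E I T X" "\<forall>y\<in>A. \<exists>f\<in>?F. cl (insert f T) = cl (insert y T)"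
    using L unfolding lifts_U34_def by blast+
  have finF: "finite ?F" using circuitD(2)[OF C(1)] by blast
  have fF: "f \<in> ?F" and eF: "e \<notin> ?F" and fe: "f \<noteq> e" using e f by blast+
  have T_cl: "T \<subseteq> cl T" using subset_closure[OF T] .
  have F_E: "?F \<subseteq> E - T" using circuitD(1)[OF C(1)] T_cl by blast
  have eET: "e \<in> E - T" and fET: "f \<in> E - T"
    using e(3,4) fF F_E closure_subset_ground T_cl by blast+
  let ?G = "C2 - {e} - cl T"
  have G: "?G \<subseteq> ?F - {f}" using e(1,2) f(1) fe by blast
  then have "finite ?G" using finF finite_subset by blast
  then have "contr_indep E I T (insert e ?G) \<longleftrightarrow> contr_indep E I T (insert f ?G)"
    using G by (intro contr_indep_swap[OF T par eET _ fET]) auto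
  moreover have "C2 - cl T = insert e ?G" using e(1,3) by blast
  then have "\<not> contr_indep E I T (insert e ?G)"
    using circuit_contract_dependent[OF T C2] by simp
  ultimately have "\<not> contr_indep E I T (insert f ?G)" by blast
  moreover have "insert f ?G \<subseteq> ?F" using G fF by blast
  ultimately have "insert f ?G = ?F" using C(4)[of "insert f ?G"] by blast
  then have C2_F: "C2 - cl T = insert e (?F - {f})" using G e(1,3) by blast
  have "card (C2 - cl T) = 4"
    using C(3) finF fF eF unfolding C2_F by (simp add: card_Diff_singleton)
  moreover have "contr_indep E I T X" if "X \<subset> C2 - cl T" for X
    using contr_indep_psubset_exchange[OF T par eET eF fF F_E finF C(4)] that unfolding C2_F by blast
  moreover have "\<exists>f'\<in>C2 - cl T. cl (insert f' T) = cl (insert y T)" if y: "y \<in> A" for y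
  proof -
    obtain f' where f': "f' \<in> ?F" "cl (insert f' T) = cl (insert y T)"
      using bspec[OF C(5) y] by blast
    show ?thesis
    proof (cases "f' = f")
      case True
      then show ?thesis using f'(2) par unfolding C2_F by (intro bexI[of _ e]) simp_all
    next
      case False
      then show ?thesis using f' unfolding C2_F by (intro bexI[of _ f']) simp_all
    qed
  qed
  moreover have "C2 \<subseteq> cl (A \<union> T)" using C(2) e(2,4) by blast
  moreover have "card C + 2 = card C1 + card C2"
    using card_Un_Diff_common[OF circuitD(2)[OF C1] circuitD(2)[OF C2] e(1)] e(2) by simp
  then have "card C2 < card C" using C1_card by linarith
  ultimately show ?thesis using C2 unfolding lifts_U34_def by blast
qed

lemma lifts_U34_parallel_point:
  assumes T: "T \<subseteq> E" and A: "A \<subseteq> E - T" and hits: "hits_parallel_classes T A"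
    and L: "lifts_U34 T A C" and e: "e \<in> cl (A \<union> T)"
  obtains f where "f \<in> C - cl T" "e \<in> cl T \<or> cl (insert e T) = cl (insert f T)"
proof (cases "e \<in> cl T")
  case True
  have "C - cl T \<noteq> {}" using L unfolding lifts_U34_def by fastforce
  then show thesis using that True by blast
next
  case False
  then obtain y where y: "y \<in> A" "e \<in> cl (insert y T)"
    using e hits unfolding hits_parallel_classes_def by blast
  have "y \<in> E" using y(1) A by blast
  then have "cl (insert e T) = cl (insert y T)" using closure_insert_eq[OF T _ False y(2)] by blast
  moreover have "\<forall>y\<in>A. \<exists>f\<in>C - cl T. cl (insert f T) = cl (insert y T)"
    using L unfolding lifts_U34_def by blast
  then obtain f where "f \<in> C - cl T" "cl (insert f T) = cl (insert y T)"
    using y(1) by blast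
  ultimately show thesis using that by simp
qed

lemma lifts_U34_split:
  assumes T: "T \<subseteq> E" and A: "A \<subseteq> E - T" and hits: "hits_parallel_classes T A"
    and L: "lifts_U34 T A C" and C1: "circuit E I C1" and C2: "circuit E I C2"
    and e: "C1 \<inter> C2 = {e}" "C = (C1 \<union> C2) - {e}" and card: "card C1 \<ge> 3" "card C2 \<ge> 3"
  shows "\<exists>C'. lifts_U34 T A C' \<and> card C' < card C"
proof -
  have "e \<in> cl (C1 - {e})" using circuit_mem_closure[OF C1] e(1) by blast
  moreover have "C \<subseteq> cl (A \<union> T)" using L unfolding lifts_U34_def by blast
  then have "cl (C1 - {e}) \<subseteq> cl (A \<union> T)"
    using e(2) by (intro closure_subset_closureI) blast
  ultimately have e_cl: "e \<in> cl (A \<union> T)" by blast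
  then obtain f where f: "f \<in> C - cl T" "e \<in> cl T \<or> cl (insert e T) = cl (insert f T)"
    by (rule lifts_U34_parallel_point[OF T A hits L])
  have shrink: "\<exists>C'. lifts_U34 T A C' \<and> card C' < card C"
    if D1: "circuit E I D1" and D2: "circuit E I D2" and D: "D1 \<inter> D2 = {e}" "C = (D1 \<union> D2) - {e}"
      and card: "card D1 \<ge> 3" "card D2 \<ge> 3" and fD: "f \<in> D1" for D1 D2
  proof (cases "e \<in> cl T")
    case True
    then show ?thesis using lifts_U34_split_loop[OF T L D1 D2 D True fD f(1) card(2)] by blast
  next
    case False
    then have "cl (insert e T) = cl (insert f T)" using f(2) by blast
    then show ?thesis
      using lifts_U34_split_nonloop[OF T L D1 D2 D False e_cl fD f(1) _ card(1)] by blast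
  qed
  have "f \<in> C1 \<or> f \<in> C2" using f(1) e(2) by blast
  then show ?thesis
  proof
    assume "f \<in> C1"
    then show ?thesis using shrink[OF C1 C2 e card] by blast
  next
    assume "f \<in> C2"
    moreover have "C2 \<inter> C1 = {e}" "C = (C2 \<union> C1) - {e}" using e by blast+
    ultimately show ?thesis using shrink[OF C2 C1 _ _ card(2,1)] by blast
  qed
qed

lemma chordal_no_U34_contract_restrict:
  assumes simple: "simple_matroid E I" and chordal: "chordal E I"
    and T: "T \<subseteq> E" and A: "A \<subseteq> E - T" and hits: "hits_parallel_classes T A"
  shows "\<not> is_U34 A (minor_indep T A)"
proof
  assume "is_U34 A (minor_indep T A)"
  then obtain C0 where "lifts_U34 T A C0" using lifts_U34_exists[OF T A] by blast
  then obtain C where L: "lifts_U34 T A C" and min: "\<And>C'. lifts_U34 T A C' \<Longrightarrow> card C \<le> card C'"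
    using ex_has_least_nat[of "lifts_U34 T A" C0 card] by blast
  have C: "circuit E I C" and "card (C - cl T) = 4" using L unfolding lifts_U34_def by blast+
  then have "card C \<ge> 4" using card_mono[OF circuitD(2)[OF C], of "C - cl T"] by simp
  then obtain C1 C2 e where C12: "circuit E I C1" "circuit E I C2" and e: "C1 \<inter> C2 = {e}" "C = (C1 \<union> C2) - {e}"
    using chordal C unfolding chordal_def by blast
  have "card C1 \<ge> 3" "card C2 \<ge> 3" using simple C12 unfolding simple_matroid_def by blast+
  then show False using lifts_U34_split[OF T A hits L C12 e] min by fastforce
qed

lemma chordal_no_U34_induced_minor:
  assumes "simple_matroid E I" "chordal E I" "induced_minor E I A J"
  shows "\<not> is_U34 A J"
  using induced_minor_contract_restrict[OF assms(3)] chordal_no_U34_contract_restrict[OF assms(1,2)] by blast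

lemma obtain_circuit_through:
  assumes X: "I X" and x: "x \<in> cl X" "x \<notin> X"
  obtains C where "circuit E I C" "x \<in> C" "C \<subseteq> insert x X"
proof -
  have "r (insert x X) = card X" using x rank_indep[OF X] by (simp add: closure_iff)
  moreover have "card (insert x X) = Suc (card X)" using finite_indep[OF X] x(2) by simp
  moreover have "insert x X \<subseteq> E" using x(1) indep_subset_ground[OF X] closure_subset_ground by blast
  ultimately obtain C where C: "C \<subseteq> insert x X" "circuit E I C"
    using indep_iff_rank obtain_circuit by (metis n_not_Suc_n)
  moreover have "x \<in> C" using C circuitD(3)[OF C(2)] indep_subset[OF X] by blast
  ultimately show thesis using that by blast
qed

definition represents :: "('a \<Rightarrow> nat \<Rightarrow> bit) \<Rightarrow> bool" where
  "represents v \<longleftrightarrow> (\<forall>X. X \<subseteq> E \<longrightarrow>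
     (I X \<longleftrightarrow> (\<forall>Y. Y \<subseteq> X \<and> Y \<noteq> {} \<longrightarrow> (\<exists>i. (\<Sum>e\<in>Y. v e i) \<noteq> 0))))"

lemma binary_matroid_iff_represents: "binary_matroid E I \<longleftrightarrow> (\<exists>v. represents v)"
  unfolding binary_matroid_def represents_def ..

lemma represents_zero_sum_dependent:
  assumes "represents v" "X \<subseteq> E" "Y \<subseteq> X" "Y \<noteq> {}" "\<forall>i. (\<Sum>e\<in>Y. v e i) = 0"
  shows "\<not> I X"
  using assms unfolding represents_def by blast

lemma represents_zero_sum_subset_circuit:
  assumes v: "represents v" and C: "circuit E I C" and Y: "Y \<subseteq> C" "Y \<noteq> {}" "\<forall>i. (\<Sum>e\<in>Y. v e i) = 0"
  shows "Y = C"
  using represents_zero_sum_dependent[OF v _ subset_refl Y(2,3)] circuit_psubset_indep[OF C] Y(1) circuitD(1)[OF C]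
  by blast

lemma represents_circuit_zero_sum:
  assumes v: "represents v" and C: "circuit E I C"
  shows "(\<Sum>e\<in>C. v e i) = 0"
proof -
  have "\<not> (\<forall>Y. Y \<subseteq> C \<and> Y \<noteq> {} \<longrightarrow> (\<exists>i. (\<Sum>e\<in>Y. v e i) \<noteq> 0))"
    using v circuitD(1,3)[OF C] unfolding represents_def by blast
  then obtain Y where Y: "Y \<subseteq> C" "Y \<noteq> {}" "\<forall>i. (\<Sum>e\<in>Y. v e i) = 0"
    by blast
  then show ?thesis using represents_zero_sum_subset_circuit[OF v C] by blast
qed

lemma binary_circuit_split:
  assumes v: "represents v" and simple: "simple_matroid E I" and C: "circuit E I C"
    and x: "x \<in> cl C" "x \<notin> C"
  obtains C1 C2 where "circuit E I C1" "circuit E I C2" "C1 \<inter> C2 = {x}" "C = (C1 \<union> C2) - {x}"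
proof -
  have finC: "finite C" and CE: "C \<subseteq> E" using circuitD[OF C] by blast+
  have sum_zero: "(\<Sum>e\<in>sym_diff D D'. v e i) = 0" if "circuit E I D" "circuit E I D'" for D D' i
    using sum_bit_sym_diff[OF circuitD(2)[OF that(1)] circuitD(2)[OF that(2)]]
      represents_circuit_zero_sum[OF v that(1)] represents_circuit_zero_sum[OF v that(2)] by simp
  obtain c where c: "c \<in> C" using circuitD(4)[OF C] by blast
  have "C \<subseteq> cl (C - {c})"
    using circuit_mem_closure[OF C c] subset_closure[of "C - {c}"] CE by blast
  then have "x \<in> cl (C - {c})" using x(1) closure_subset_closureI by blast
  moreover have "x \<notin> C - {c}" using x(2) by blast
  ultimately obtain C1 where C1: "circuit E I C1" "x \<in> C1" "C1 \<subseteq> insert x (C - {c})"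
    by (rule obtain_circuit_through[OF circuitD(5)[OF C c]])
  have "card C1 \<ge> 3" using simple C1(1) unfolding simple_matroid_def by blast
  then have "C1 \<noteq> {x}" by auto
  then have C_C1: "C \<inter> C1 \<noteq> {}" using C1(2,3) by blast
  have D: "sym_diff C C1 = insert x (C - C1)" using C1(2,3) x(2) by blast
  have DE: "sym_diff C C1 \<subseteq> E" using D CE x(1) closure_subset_ground by blast
  have "\<not> I (sym_diff C C1)"
    by (rule represents_zero_sum_dependent[OF v DE subset_refl]) (use D sum_zero[OF C C1(1)] in auto)
  then obtain C2 where C2: "C2 \<subseteq> insert x (C - C1)" "circuit E I C2"
    using obtain_circuit[OF DE] unfolding D by blast
  have "x \<in> C2"
    using C2 C_C1 circuitD(3)[OF C2(2)] circuit_psubset_indep[OF C, of C2] by blast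
  then have C12: "C1 \<inter> C2 = {x}" using C1(2) C2(1) by blast
  then have "sym_diff C1 C2 = (C1 \<union> C2) - {x}" by blast
  moreover have "(C1 \<union> C2) - {x} \<subseteq> C" using C1(3) C2(1) by blast
  moreover have "(C1 \<union> C2) - {x} \<noteq> {}" using C1(2) \<open>C1 \<noteq> {x}\<close> by blast
  ultimately have "(C1 \<union> C2) - {x} = C"
    using represents_zero_sum_subset_circuit[OF v C] sum_zero[OF C1(1) C2(2)] by simp
  then show thesis using that C1(1) C2(2) C12 by blast
qed

lemma binary_unsplittable_circuit_closed:
  assumes "binary_matroid E I" "simple_matroid E I" "circuit E I C"
    and "\<not> (\<exists>C1 C2 e. circuit E I C1 \<and> circuit E I C2 \<and> C1 \<inter> C2 = {e} \<and> C = (C1 \<union> C2) - {e})"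
  shows "cl C \<subseteq> C"
proof
  fix x assume "x \<in> cl C"
  obtain v where "represents v" using assms(1) binary_matroid_iff_represents by blast
  then show "x \<in> C"
    using binary_circuit_split[OF _ assms(2,3) \<open>x \<in> cl C\<close>] assms(4) by blast
qed

lemma contract_circuit_indep_iff:
  assumes C: "circuit E I C" and F: "F \<subseteq> C" "F \<noteq> {}" and X: "X \<subseteq> F"
  shows "contr_indep E I (C - F) X \<longleftrightarrow> X \<noteq> F"
proof -
  let ?T = "C - F"
  have fin: "finite C" using circuitD(2)[OF C] .
  have "r ?T = card ?T" using F by (intro rank_indep circuit_psubset_indep[OF C]) auto
  moreover have "finite X" using X F by (intro finite_subset[OF _ fin]) blast
  then have card_XT: "card (X \<union> ?T) = card X + card ?T"
    using X fin by (intro card_Un_disjoint) auto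
  moreover have "r (X \<union> ?T) = card (X \<union> ?T)" if "X \<noteq> F"
    using that X F by (intro rank_indep circuit_psubset_indep[OF C]) auto
  moreover have "r (X \<union> ?T) = card (X \<union> ?T) - 1" if "X = F"
    using that F rank_circuit[OF C] by (simp add: Un_absorb1)
  moreover have "card (X \<union> ?T) > 0" if "X = F"
    using that F fin by (auto simp: card_gt_0_iff Un_absorb1)
  moreover have "X \<subseteq> E - ?T" using X F circuitD(1)[OF C] by blast
  ultimately show ?thesis unfolding contr_indep_def by (cases "X = F") auto
qed

lemma induced_minor_flat_contraction:
  assumes T: "T \<subseteq> E" and F: "F \<subseteq> E - T" "F \<inter> cl T = {}"
    and inj: "inj_on (\<lambda>f. cl (insert f T)) F" and flat: "cl (F \<union> T) \<subseteq> F \<union> T"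
  shows "induced_minor E I F (minor_indep T F)"
proof -
  have "F \<subseteq> (E - T) - cl T" using F by blast
  then obtain S where S: "F \<subseteq> S" "S \<subseteq> (E - T) - cl T"
    and rep: "\<forall>e\<in>(E - T) - cl T. \<exists>!s. s \<in> S \<and> cl (insert s T) = cl (insert e T)"
    by (rule obtain_transversal_extending[OF _ inj])
  have "simplification_set (E - T) (minor_indep T (E - T)) S"
    unfolding simplification_set_minor_indep_iff[OF T subset_refl]
    using S(2) by (intro conjI rep) blast+
  then have minor_S: "induced_minor E I S (minor_indep T S)"
    using induced_minor.contract_simplify[OF induced_minor.refl T] unfolding minor_indep_ground by simp
  have "closure S (minor_indep T S) F = F"
  proof (intro equalityI subsetI)
    fix x assume "x \<in> closure S (minor_indep T S) F"
    moreover from this have "x \<in> S" unfolding closure_def by blast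
    ultimately show "x \<in> F" using closure_minor_indep[OF T _ S(1)] S(2) flat by blast
  next
    fix x assume "x \<in> F"
    then show "x \<in> closure S (minor_indep T S) F"
      using closure_minor_indep[OF T _ S(1)] S subset_closure[of "F \<union> T"] F T by blast
  qed
  then have "flat S (minor_indep T S) F" using S(1) unfolding flat_def by blast
  from induced_minor.restrict_flat[OF minor_S this] show ?thesis
    using restr_indep_restr_indep[OF S(1)] by simp
qed

lemma closed_circuit_U34_induced_minor:
  assumes C: "circuit E I C" and closed: "cl C \<subseteq> C" and card: "card C \<ge> 4"
  shows "\<exists>F J. induced_minor E I F J \<and> is_U34 F J"
proof -
  obtain F where F: "F \<subseteq> C" "card F = 4" using obtain_subset_with_card_n[OF card] by blast
  let ?T = "C - F"
  have T: "?T \<subseteq> E" and F_E: "F \<subseteq> E - ?T" using F circuitD(1)[OF C] by blast+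
  have indep_iff: "contr_indep E I ?T X \<longleftrightarrow> X \<noteq> F" if "X \<subseteq> F" for X
  proof -
    have "F \<noteq> {}" using F(2) by auto
    then show ?thesis using contract_circuit_indep_iff[OF C F(1) _ that] by blast
  qed
  have "f \<notin> cl ?T" if "f \<in> F" for f
  proof -
    have "{f} \<noteq> F" using F(2) by auto
    then have "r (insert f ?T) = Suc (r ?T)" using indep_iff[of "{f}"] that by (simp add: contr_indep_def)
    then show ?thesis by (simp add: closure_iff)
  qed
  moreover have "cl (insert f ?T) \<noteq> cl (insert g ?T)" if "f \<in> F" "g \<in> F" "f \<noteq> g" for f g
  proof
    assume par: "cl (insert f ?T) = cl (insert g ?T)"
    have "{f, g} \<noteq> F" using F(2) card_2_iff[of "{f, g}"] that(3) by auto
    then have "r (insert g (insert f ?T)) = Suc (Suc (r ?T))"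
      using indep_iff[of "{f, g}"] that by (simp add: contr_indep_def insert_commute)
    moreover have "g \<in> cl (insert f ?T)" using par mem_closure_insert[OF T] that(2) F_E by blast
    then have "r (insert g (insert f ?T)) = r (insert f ?T)" by (simp add: closure_iff)
    ultimately show False using rank_insert_le[of f ?T] by simp
  qed
  then have "inj_on (\<lambda>f. cl (insert f ?T)) F" by (meson inj_onI)
  moreover have "F \<union> ?T = C" using F(1) by blast
  then have "cl (F \<union> ?T) \<subseteq> F \<union> ?T" using closed by simp
  ultimately have "induced_minor E I F (minor_indep ?T F)"
    using induced_minor_flat_contraction[OF T F_E] by blast
  moreover have "is_U34 F (minor_indep ?T F)"
    unfolding is_U34_def
  proof (intro conjI allI)
    fix X
    have "finite F" using F(2) card_gt_0_iff by fastforce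
    then have "X \<noteq> F \<longleftrightarrow> card X \<le> 3" if "X \<subseteq> F"
      using that psubset_card_mono[of F X] F(2) by fastforce
    then show "minor_indep ?T F X \<longleftrightarrow> X \<subseteq> F \<and> card X \<le> 3"
      using indep_iff unfolding restr_indep_def by blast
  qed (rule F(2))
  ultimately show ?thesis by blast
qed

end

theorem lemma3p8:
  fixes E :: "'a set" and I :: "'a set \<Rightarrow> bool"
  assumes "matroid E I" and "simple_matroid E I" and "binary_matroid E I"
  shows "chordal E I \<longleftrightarrow> \<not> (\<exists>E' I'. induced_minor E I E' I' \<and> is_U34 E' I')"
proof -
  interpret indep_matroid E I by (rule indep_matroid.intro) fact
  show ?thesis
  proof
    assume "chordal E I"
    then show "\<not> (\<exists>E' I'. induced_minor E I E' I' \<and> is_U34 E' I')"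
      using chordal_no_U34_induced_minor[OF assms(2)] by blast
  next
    assume no_U34: "\<not> (\<exists>E' I'. induced_minor E I E' I' \<and> is_U34 E' I')"
    show "chordal E I"
      unfolding chordal_def
    proof (intro allI impI)
      fix C assume C: "circuit E I C \<and> card C \<ge> 4"
      show "\<exists>C1 C2 e. circuit E I C1 \<and> circuit E I C2 \<and> C1 \<inter> C2 = {e} \<and> C = (C1 \<union> C2) - {e}"
      proof (rule ccontr)
        assume "\<not> ?thesis"
        then have "cl C \<subseteq> C" using binary_unsplittable_circuit_closed[OF assms(3,2)] C by blast
        then show False using closed_circuit_U34_induced_minor C no_U34 by blast
      qed
    qed
  qed
qed

end
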